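(* Let $(p_n)_{n\ge1}$ be a strictly increasing sequence of odd primes and let $G=\big\langle \frac{1}{2^np_n} : n\in\mathbb N\big\rangle$ be the additive submonoid of $\mathbb Q_{\ge0}$ they generate. Then $\mathcal A(G)=\{\frac1{2^np_n}: n\in\mathbb N\}$, and $G$ is neither a BFM nor an IDF monoid.
   Context: Monoids are commutative, cancellative, with identity, written additively. $\mathcal A(G)$ is the set of atoms (nonunits not expressible as a sum of two nonunits). $G$ is a BFM if every element is a finite sum of atoms and has only finitely many factorization lengths; $G$ is IDF if every element is divisible (in $G$) by only finitely many atoms. *)

theory Defs
  imports Complex_Main "HOL-Computational_Algebra.Primes"
begin

inductive_set gen_monoid :: "rat set \<Rightarrow> rat set" for S :: "rat set" where
  zero: "0 \<in> gen_monoid S"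
| gen: "s \<in> S \<Longrightarrow> s \<in> gen_monoid S"
| add: "x \<in> gen_monoid S \<Longrightarrow> y \<in> gen_monoid S \<Longrightarrow> x + y \<in> gen_monoid S"

definition munits :: "rat set \<Rightarrow> rat set" where
  "munits M = {u \<in> M. \<exists>v \<in> M. u + v = 0}"

definition atoms :: "rat set \<Rightarrow> rat set" where
  "atoms M = {a \<in> M. a \<notin> munits M \<and>
     (\<forall>b \<in> M. \<forall>c \<in> M. a = b + c \<longrightarrow> b \<in> munits M \<or> c \<in> munits M)}"

definition mdvd :: "rat set \<Rightarrow> rat \<Rightarrow> rat \<Rightarrow> bool" where
  "mdvd M a x \<longleftrightarrow> (\<exists>c \<in> M. x = a + c)"

definition lengths :: "rat set \<Rightarrow> rat \<Rightarrow> nat set" where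
  "lengths M x = {length xs | xs. set xs \<subseteq> atoms M \<and> sum_list xs = x}"

definition is_BFM :: "rat set \<Rightarrow> bool" where
  "is_BFM M \<longleftrightarrow> (\<forall>x \<in> M. x \<notin> munits M \<longrightarrow> lengths M x \<noteq> {} \<and> finite (lengths M x))"

definition is_IDF :: "rat set \<Rightarrow> bool" where
  "is_IDF M \<longleftrightarrow> (\<forall>x \<in> M. finite {a \<in> atoms M. mdvd M a x})"

end

theory Submission
  imports Defs
begin

text \<open>
  Every generator \<open>a\<^sub>n = 1/(2\<^sup>n p\<^sub>n)\<close> is an atom because it is not a sum of the other
  generators: those all lie in the localisation \<open>\<int>\<^sub>(\<^sub>p\<^sub>n\<^sub>)\<close>, which is closed under addition,
  whereas \<open>a\<^sub>n\<close> does not. On the other hand \<open>1/2 = (2\<^sup>n\<^sup>-\<^sup>1 p\<^sub>n) \<cdot> a\<^sub>n\<close> for every \<open>n\<close>, so \<open>1/2\<close>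
  has the unbounded set of factorization lengths \<open>2\<^sup>n\<^sup>-\<^sup>1 p\<^sub>n\<close> and is divisible by all of the
  infinitely many atoms.
\<close>

lemma gen_monoid_nonneg:
  assumes "S \<subseteq> {0..}" and "x \<in> gen_monoid S"
  shows "x \<ge> 0"
  using assms(2) by induction (use assms(1) in auto)

lemma munits_gen_monoid:
  assumes "S \<subseteq> {0..}"
  shows "munits (gen_monoid S) = {0}"
  using gen_monoid_nonneg[OF assms] gen_monoid.zero unfolding munits_def
  by (force simp: add_nonneg_eq_0_iff)

lemma gen_monoid_nonzero_cases:
  assumes "x \<in> gen_monoid S" and "x \<noteq> 0"
  shows "x \<in> S \<or> (\<exists>b \<in> gen_monoid S. \<exists>c \<in> gen_monoid S. b \<noteq> 0 \<and> c \<noteq> 0 \<and> x = b + c)"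
  using assms
proof induction
  case (add x y)
  show ?case
  proof (cases "x = 0 \<or> y = 0")
    case True
    then show ?thesis
    proof
      assume "x = 0"
      with add show ?thesis by simp
    next
      assume "y = 0"
      with add show ?thesis by simp
    qed
  next
    case False
    with add.hyps show ?thesis by blast
  qed
qed auto

lemma gen_monoid_Diff_if_less:
  assumes "S \<subseteq> {0..}" and "x \<in> gen_monoid S" and "x < s"
  shows "x \<in> gen_monoid (S - {s})"
  using assms(2,3)
proof induction
  case (add x y)
  with gen_monoid_nonneg[OF assms(1)] have "x < s" and "y < s" by force+
  with add.IH show ?case by (blast intro: gen_monoid.add)
qed (auto intro: gen_monoid.intros)

lemma atoms_gen_monoid:
  assumes pos: "S \<subseteq> {0<..}"
    and minimal: "\<And>s. s \<in> S \<Longrightarrow> s \<notin> gen_monoid (S - {s})"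
  shows "atoms (gen_monoid S) = S"
proof -
  have nonneg: "S \<subseteq> {0..}" using pos by auto
  note units = munits_gen_monoid[OF nonneg]
  have "s \<in> atoms (gen_monoid S)" if "s \<in> S" for s
  proof -
    have "b = 0 \<or> c = 0" if "b \<in> gen_monoid S" "c \<in> gen_monoid S" "s = b + c" for b c
    proof (rule ccontr)
      assume "\<not> (b = 0 \<or> c = 0)"
      with that gen_monoid_nonneg[OF nonneg] have "b < s" and "c < s" by force+
      with that have "s \<in> gen_monoid (S - {s})"
        by (metis gen_monoid.add gen_monoid_Diff_if_less[OF nonneg])
      with minimal \<open>s \<in> S\<close> show False by blast
    qed
    with \<open>s \<in> S\<close> pos show ?thesis
      unfolding atoms_def units by (auto intro: gen_monoid.gen)
  qed
  moreover have "x \<in> S" if "x \<in> atoms (gen_monoid S)" for x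
    using that gen_monoid_nonzero_cases[of x S] unfolding atoms_def units by auto
  ultimately show ?thesis by blast
qed

lemma of_nat_mult_in_gen_monoid:
  assumes "s \<in> S"
  shows "of_nat k * s \<in> gen_monoid S"
  by (induction k) (auto simp: distrib_right intro: gen_monoid.intros assms)

lemma mdvd_gen_monoid_multiple:
  assumes "s \<in> S" and "k \<ge> 1"
  shows "mdvd (gen_monoid S) s (of_nat k * s)"
proof -
  have "of_nat k * s = s + of_nat (k - 1) * s"
    using assms(2) by (simp add: of_nat_diff algebra_simps)
  then show ?thesis
    unfolding mdvd_def using of_nat_mult_in_gen_monoid[OF assms(1)] by blast
qed

lemma multiple_of_atom_lengths:
  assumes "a \<in> atoms M"
  shows "k \<in> lengths M (of_nat k * a)"
  unfolding lengths_def using assms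
  by (intro CollectI exI[of _ "replicate k a"]) (auto simp: sum_list_replicate)

text \<open>For prime \<open>q\<close>, this is membership in the localisation \<open>\<int>\<^sub>(\<^sub>q\<^sub>)\<close>.\<close>

definition local_integral :: "nat \<Rightarrow> rat \<Rightarrow> bool" where
  "local_integral q x \<longleftrightarrow> (\<exists>d::nat. \<not> q dvd d \<and> of_nat d * x \<in> \<int>)"

lemma local_integral_0: "q \<noteq> 1 \<Longrightarrow> local_integral q 0"
  unfolding local_integral_def by (intro exI[of _ 1]) simp

lemma local_integral_add:
  assumes "prime q" and "local_integral q x" and "local_integral q y"
  shows "local_integral q (x + y)"
proof -
  obtain d e :: nat where "\<not> q dvd d" "of_nat d * x \<in> \<int>" "\<not> q dvd e" "of_nat e * y \<in> \<int>"
    using assms(2,3) unfolding local_integral_def by blast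
  moreover have "of_nat (d * e) * (x + y) = of_nat e * (of_nat d * x) + of_nat d * (of_nat e * y)"
    by (simp add: algebra_simps)
  ultimately show ?thesis
    unfolding local_integral_def using assms(1)
    by (metis Ints_add Ints_mult Ints_of_nat prime_dvd_mult_iff)
qed

lemma local_integral_gen_monoid:
  assumes "prime q" and "\<And>s. s \<in> S \<Longrightarrow> local_integral q s" and "x \<in> gen_monoid S"
  shows "local_integral q x"
  using assms(3)
proof induction
  case zero
  from \<open>prime q\<close> show ?case by (auto intro: local_integral_0)
next
  case (add x y)
  from \<open>prime q\<close> add.IH show ?case by (rule local_integral_add)
qed (rule assms(2))

lemma local_integral_inverse_iff:
  assumes "m > 0"
  shows "local_integral q (1 / of_nat m) \<longleftrightarrow> \<not> q dvd m"
proof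
  assume "local_integral q (1 / of_nat m)"
  then obtain d :: nat and k :: int where "\<not> q dvd d" "of_nat d * (1 / of_nat m) = (of_int k :: rat)"
    unfolding local_integral_def by (auto elim: Ints_cases)
  with assms have "int d = k * int m"
    by (simp add: field_simps) (metis of_int_eq_iff of_int_mult of_int_of_nat_eq)
  then have "int m dvd int d" by simp
  with \<open>\<not> q dvd d\<close> show "\<not> q dvd m" by (meson dvd_trans of_nat_dvd_iff)
next
  assume "\<not> q dvd m"
  with assms show "local_integral q (1 / of_nat m)"
    unfolding local_integral_def by (intro exI[of _ m]) simp
qed

definition generator :: "(nat \<Rightarrow> nat) \<Rightarrow> nat \<Rightarrow> rat" where
  "generator p n = 1 / of_nat (2 ^ n * p n)"

context
  fixes p :: "nat \<Rightarrow> nat"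
  assumes strict_mono: "strict_mono_on {1..} p"
    and odd_prime: "\<And>n. n \<ge> 1 \<Longrightarrow> prime (p n) \<and> odd (p n)"
begin

lemma p_pos: "n \<ge> 1 \<Longrightarrow> p n > 0"
  using odd_prime prime_gt_0_nat by blast

lemma generator_pos: "n \<ge> 1 \<Longrightarrow> generator p n > 0"
  unfolding generator_def using p_pos by simp

lemma prime_dvd_generator_denom_iff:
  assumes "n \<ge> 1" and "m \<ge> 1"
  shows "p n dvd 2 ^ m * p m \<longleftrightarrow> m = n"
proof
  assume "p n dvd 2 ^ m * p m"
  moreover have "prime (p n)" "odd (p n)" "prime (p m)" using odd_prime assms by auto
  moreover have "\<not> p n dvd 2 ^ m"
    using \<open>prime (p n)\<close> \<open>odd (p n)\<close> prime_dvd_power primes_dvd_imp_eq two_is_prime_nat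
    by (metis dvd_refl)
  ultimately have "p n = p m" by (metis prime_dvd_mult_iff primes_dvd_imp_eq)
  with strict_mono assms show "m = n" by (auto dest: strict_mono_on_eqD)
qed simp

lemma local_integral_generator_iff:
  assumes "n \<ge> 1" and "m \<ge> 1"
  shows "local_integral (p n) (generator p m) \<longleftrightarrow> m \<noteq> n"
proof -
  have denom_pos: "0 < 2 ^ m * p m" using p_pos assms(2) by simp
  show ?thesis
    unfolding generator_def local_integral_inverse_iff[OF denom_pos]
      prime_dvd_generator_denom_iff[OF assms] ..
qed

lemma inj_on_generator: "inj_on (generator p) {1..}"
proof (rule inj_onI)
  fix m n :: nat
  assume "m \<in> {1..}" "n \<in> {1..}" and "generator p m = generator p n"
  then show "m = n"
    using local_integral_generator_iff[of n m] local_integral_generator_iff[of n n] by auto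
qed

lemma atoms_generated_monoid: "atoms (gen_monoid (generator p ` {1..})) = generator p ` {1..}"
proof (rule atoms_gen_monoid)
  show "generator p ` {1..} \<subseteq> {0<..}" using generator_pos by auto
next
  fix s assume "s \<in> generator p ` {1..}"
  then obtain n where n: "n \<ge> 1" "s = generator p n" by auto
  have "local_integral (p n) x" if "x \<in> gen_monoid (generator p ` {1..} - {s})" for x
    using that
    by (rule local_integral_gen_monoid[rotated 2])
       (use odd_prime n local_integral_generator_iff in auto)
  with n local_integral_generator_iff show "s \<notin> gen_monoid (generator p ` {1..} - {s})"
    by blast
qed

lemma half_eq_multiple_generator:
  assumes "n \<ge> 1"
  shows "1 / 2 = of_nat (2 ^ (n - 1) * p n) * generator p n"
proof -
  obtain k where "n = Suc k" using assms by (cases n) auto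
  with p_pos[OF assms] show ?thesis unfolding generator_def by simp
qed

lemma half_in_generated_monoid: "1 / 2 \<in> gen_monoid (generator p ` {1..})"
proof -
  have "generator p 1 \<in> generator p ` {1..}" by simp
  from of_nat_mult_in_gen_monoid[OF this, of "2 ^ (1 - 1) * p 1"] show ?thesis
    unfolding half_eq_multiple_generator[OF order.refl, symmetric] .
qed

lemma not_BFM_generated_monoid: "\<not> is_BFM (gen_monoid (generator p ` {1..}))"
proof -
  let ?G = "gen_monoid (generator p ` {1..})"
  have lengths_half: "2 ^ (n - 1) * p n \<in> lengths ?G (1 / 2)" if "n \<ge> 1" for n
  proof -
    have "generator p n \<in> atoms ?G" using atoms_generated_monoid that by blast
    from multiple_of_atom_lengths[OF this, of "2 ^ (n - 1) * p n"] show ?thesis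
      unfolding half_eq_multiple_generator[OF that, symmetric] .
  qed
  have "infinite (lengths ?G (1 / 2))"
  proof
    assume "finite (lengths ?G (1 / 2))"
    then obtain B where B: "\<forall>k \<in> lengths ?G (1 / 2). k < B"
      by (auto simp: finite_nat_set_iff_bounded)
    have "B < 2 ^ B" by (rule less_exp)
    also have "\<dots> \<le> 2 ^ B * p (Suc B)" using p_pos[of "Suc B"] by simp
    also have "\<dots> < B" using B lengths_half[of "Suc B"] by simp
    finally show False ..
  qed
  moreover have "1 / 2 \<notin> munits ?G"
    using munits_gen_monoid[of "generator p ` {1..}"] generator_pos by fastforce
  ultimately show ?thesis
    unfolding is_BFM_def using half_in_generated_monoid by blast
qed

lemma not_IDF_generated_monoid: "\<not> is_IDF (gen_monoid (generator p ` {1..}))"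
proof -
  let ?G = "gen_monoid (generator p ` {1..})"
  have "generator p ` {1..} \<subseteq> {a \<in> atoms ?G. mdvd ?G a (1 / 2)}"
  proof (intro subsetI CollectI conjI)
    fix a assume a: "a \<in> generator p ` {1..}"
    then show "a \<in> atoms ?G" using atoms_generated_monoid by blast
    from a obtain n where n: "n \<ge> 1" "a = generator p n" by auto
    then have "1 \<le> 2 ^ (n - 1) * p n" using p_pos by (simp add: Suc_le_eq)
    from mdvd_gen_monoid_multiple[OF a this] show "mdvd ?G a (1 / 2)"
      unfolding n(2) half_eq_multiple_generator[OF n(1), symmetric] .
  qed
  moreover have "infinite (generator p ` {1..})"
    using inj_on_generator finite_imageD infinite_Ici by blast
  moreover note half_in_generated_monoid
  ultimately show ?thesis unfolding is_IDF_def using finite_subset by blast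
qed

end

theorem mainTheorem8:
  fixes p :: "nat \<Rightarrow> nat"
  assumes "strict_mono_on {1..} p"
    and "\<And>n. n \<ge> 1 \<Longrightarrow> prime (p n) \<and> odd (p n)"
  defines "G \<equiv> gen_monoid {1 / (2 ^ n * of_nat (p n)) | n. n \<ge> 1}"
  shows "atoms G = {1 / (2 ^ n * of_nat (p n)) | n. n \<ge> 1}
         \<and> \<not> is_BFM G \<and> \<not> is_IDF G"
proof -
  have "{1 / (2 ^ n * of_nat (p n)) | n. n \<ge> 1} = generator p ` {1..}"
    by (auto simp: generator_def)
  then show ?thesis
    unfolding G_def
    using atoms_generated_monoid not_BFM_generated_monoid not_IDF_generated_monoid assms(1,2)
    by simp
qed

end
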